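(* Let $\mathcal T\subseteq2^X$ be closed under taking supersets and contain all cocircuits. Then there is an isomorphism of $S[\mathfrak g^*]$-modules $D_{\mathcal T}(X)\cong Hom_{\mathbb{R}}(D^*_{\mathcal T}(X),\mathbb{R})$.
   Context: $G$ is a compact torus of dimension $d$, $\Gamma$ its character lattice, $V=\Gamma\otimes\mathbb{R}=\mathfrak g^*$, $S[\mathfrak g^*]\cong\mathbb{R}[x_1,\dots,x_d]$ the symmetric algebra of $V$. $X$ is a finite list of nonzero elements of $\Gamma$ spanning $V$; a cocircuit is the sublist of elements of $X$ not in a hyperplane spanned by elements of $X$. $D_{\mathcal T}(X)=\{f:V\to\mathbb{R}\text{ smooth}:\partial_Af=0\ \forall A\in\mathcal T\}$ where $\partial_A=\prod_{a\in A}\partial_a$, an $S[\mathfrak g^*]$-module with $v\in V$ acting by $\partial_v$. $D^*_{\mathcal T}(X)=S[\mathfrak g^*]/(\prod_{a\in A}a:\ A\in\mathcal T)$. $Hom_{\mathbb{R}}(N,\mathbb{R})$ is a module via $(p\phi)(n)=\phi(pn)$. *)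

theory Defs
  imports "HOL-Analysis.Analysis" "HOL-Library.Poly_Mapping"
begin

text \<open>V = real^'n (so d = CARD('n)), the symmetric algebra S[V] is the polynomial ring
  in the coordinate variables x_i, modelled as finitely supported maps from monomials
  (exponent vectors 'n =>0 nat) to real coefficients.\<close>

type_synonym 'n spoly = "('n \<Rightarrow>\<^sub>0 nat) \<Rightarrow>\<^sub>0 real"

definition pconst :: "real \<Rightarrow> 'n spoly" where
  "pconst c = Poly_Mapping.single 0 c"

definition pvar :: "'n \<Rightarrow> 'n spoly" where
  "pvar i = Poly_Mapping.single (Poly_Mapping.single i 1) 1"

definition lin :: "real^'n \<Rightarrow> 'n spoly" where
  "lin v = (\<Sum>i\<in>UNIV. pconst (v $ i) * pvar i)"

definition ddir :: "real^'n \<Rightarrow> (real^'n \<Rightarrow> real) \<Rightarrow> (real^'n \<Rightarrow> real)" where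
  "ddir v f = (\<lambda>x. frechet_derivative f (at x) v)"

coinductive smooth :: "(real^'n \<Rightarrow> real) \<Rightarrow> bool" where
  "(\<forall>x. f differentiable (at x)) \<Longrightarrow> (\<forall>v. smooth (ddir v f)) \<Longrightarrow> smooth f"

definition dirs :: "(real^'n) list \<Rightarrow> (real^'n \<Rightarrow> real) \<Rightarrow> (real^'n \<Rightarrow> real)" where
  "dirs vs f = foldr ddir vs f"

definition coord_list :: "'n::finite list" where
  "coord_list = (SOME xs. set xs = UNIV \<and> distinct xs)"

definition dmon :: "('n::finite \<Rightarrow>\<^sub>0 nat) \<Rightarrow> (real^'n \<Rightarrow> real) \<Rightarrow> (real^'n \<Rightarrow> real)" where
  "dmon m f = dirs (concat (map (\<lambda>i. replicate (Poly_Mapping.lookup m i) (axis i 1)) coord_list)) f"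

text \<open>Action of p in S[V] on functions: p(\<partial>) f.\<close>
definition pact :: "'n::finite spoly \<Rightarrow> (real^'n \<Rightarrow> real) \<Rightarrow> (real^'n \<Rightarrow> real)" where
  "pact p f = (\<lambda>x. \<Sum>m\<in>Poly_Mapping.keys p. Poly_Mapping.lookup p m * dmon m f x)"

text \<open>Sublists of X are represented by sets of indices into X.\<close>
definition cocircuit :: "(real^'n) list \<Rightarrow> nat set \<Rightarrow> bool" where
  "cocircuit X C \<longleftrightarrow> (\<exists>S H. S \<subseteq> set X \<and> H = span S \<and> dim H = CARD('n) - 1 \<and>
      C = {i. i < length X \<and> X ! i \<notin> H})"

definition D_T :: "(real^'n) list \<Rightarrow> nat set set \<Rightarrow> (real^'n \<Rightarrow> real) set" where
  "D_T X T = {f. smooth f \<and> (\<forall>A\<in>T. dirs (map (\<lambda>i. X ! i) (sorted_list_of_set A)) f = (\<lambda>x. 0))}"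

definition prodA :: "(real^'n) list \<Rightarrow> nat set \<Rightarrow> 'n::finite spoly" where
  "prodA X A = (\<Prod>i\<in>A. lin (X ! i))"

definition ideal_gen :: "'n spoly set \<Rightarrow> 'n spoly set" where
  "ideal_gen G = {\<Sum>g\<in>F. q g * g | F q. finite F \<and> F \<subseteq> G}"

text \<open>Hom_R(D*_T(X), R) = Hom_R(S[V]/I, R), I = (prodA X A : A \<in> T), identified with
  the R-linear functionals on S[V] vanishing on I.\<close>
definition Hom_DstarT :: "(real^'n) list \<Rightarrow> nat set set \<Rightarrow> ('n::finite spoly \<Rightarrow> real) set" where
  "Hom_DstarT X T = {\<phi>. (\<forall>p q. \<phi> (p + q) = \<phi> p + \<phi> q) \<and> (\<forall>c p. \<phi> (pconst c * p) = c * \<phi> p)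
      \<and> (\<forall>p\<in>ideal_gen (prodA X ` T). \<phi> p = 0)}"

end

theory Submission
  imports Defs
begin

text \<open>
  The isomorphism sends f to the functional q \<mapsto> (q(\<partial>) f)(0). It is well defined because f is
  annihilated by the ideal I generated by the products \<Prod>A, A \<in> T. Since T contains every
  cocircuit, every product of more than |X| linear forms lies in I (if the vectors not yet used
  do not span, they lie in a hyperplane whose cocircuit divides the product; otherwise trade a
  repeated factor for an unused one). Hence functions in D_T(X) have vanishing derivatives of
  order |X| + 1, so by Taylor's formula they are determined by their derivatives at 0: the map
  is injective. Conversely a functional \<phi> vanishing on I is realised by
  x \<mapsto> \<phi>(exp x) = \<Sum>k. \<phi>(x^k) / k!, a finite sum for the same reason.
\<close>

lemma smooth_differentiable: "smooth f \<Longrightarrow> f differentiable (at x)"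
  by (erule smooth.cases) auto

lemma smooth_ddir: "smooth f \<Longrightarrow> smooth (ddir v f)"
  by (erule smooth.cases) auto

lemma smooth_coinduct:
  assumes "P f"
    and "\<And>h. P h \<Longrightarrow> (\<forall>x. h differentiable (at x)) \<and> (\<forall>v. P (ddir v h) \<or> smooth (ddir v h))"
  shows "smooth f"
  using assms(1) by (rule smooth.coinduct) (use assms(2) in blast)

lemma has_derivative_ddir:
  "f differentiable (at x) \<Longrightarrow> (f has_derivative (\<lambda>v. ddir v f x)) (at x)"
  unfolding ddir_def using frechet_derivative_works by (metis eta_contract_eq)

lemma ddir_eqI: "(f has_derivative f') (at x) \<Longrightarrow> ddir v f x = f' v"
  unfolding ddir_def using frechet_derivative_at by metis

lemma linear_ddir: "f differentiable (at x) \<Longrightarrow> linear (\<lambda>v. ddir v f x)"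
  by (rule has_derivative_linear[OF has_derivative_ddir])

lemma ddir_sum_scaleR:
  assumes "f differentiable (at x)"
  shows "ddir (\<Sum>j\<in>J. c j *\<^sub>R w j) f x = (\<Sum>j\<in>J. c j * ddir (w j) f x)"
  using linear_sum[OF linear_ddir[OF assms], of "\<lambda>j. c j *\<^sub>R w j" J] linear_ddir[OF assms]
  by (simp add: o_def linear_iff)

lemma ddir_lincomb:
  assumes "\<forall>x. f differentiable (at x)" "\<forall>x. g differentiable (at x)"
  shows "ddir v (\<lambda>x. a * f x + b * g x) = (\<lambda>x. a * ddir v f x + b * ddir v g x)"
proof
  fix x
  have "((\<lambda>x. a * f x + b * g x) has_derivative (\<lambda>v. a * ddir v f x + b * ddir v g x)) (at x)"
    using assms by (auto intro!: derivative_eq_intros has_derivative_ddir)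
  then show "ddir v (\<lambda>x. a * f x + b * g x) x = a * ddir v f x + b * ddir v g x"
    by (rule ddir_eqI)
qed

lemma smooth_const: "smooth (\<lambda>x. c)"
proof (rule smooth_coinduct[where P = "\<lambda>h. \<exists>c. h = (\<lambda>x. c)"])
  fix h :: "real^'n \<Rightarrow> real"
  assume "\<exists>c. h = (\<lambda>x. c)"
  then obtain c where h: "h = (\<lambda>x. c)" by blast
  have "ddir v h = (\<lambda>x. 0)" for v
    unfolding h by (rule ext, rule ddir_eqI[OF has_derivative_const])
  then show "(\<forall>x. h differentiable (at x)) \<and> (\<forall>v. (\<exists>c. ddir v h = (\<lambda>x. c)) \<or> smooth (ddir v h))"
    unfolding h by auto
qed auto

lemma smooth_lincomb:
  assumes "smooth f" "smooth g"
  shows "smooth (\<lambda>x. a * f x + b * g x)"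
proof (rule smooth_coinduct[where P = "\<lambda>h. \<exists>a b f g. h = (\<lambda>x. a * f x + b * g x) \<and> smooth f \<and> smooth g"])
  fix h :: "real^'n \<Rightarrow> real"
  assume "\<exists>a b f g. h = (\<lambda>x. a * f x + b * g x) \<and> smooth f \<and> smooth g"
  then obtain a b f g where h: "h = (\<lambda>x. a * f x + b * g x)" and fg: "smooth f" "smooth g"
    by blast
  have d: "\<forall>x. f differentiable (at x)" "\<forall>x. g differentiable (at x)"
    using fg smooth_differentiable by auto
  have "h differentiable (at x)" for x
    unfolding h using d by (intro differentiable_add differentiable_mult differentiable_const) auto
  moreover have "\<exists>a b f' g'. ddir v h = (\<lambda>x. a * f' x + b * g' x) \<and> smooth f' \<and> smooth g'" for v
    using ddir_lincomb[OF d, of v a b] smooth_ddir[OF fg(1), of v] smooth_ddir[OF fg(2), of v]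
    unfolding h by blast
  ultimately show "(\<forall>x. h differentiable (at x)) \<and>
      (\<forall>v. (\<exists>a b f g. ddir v h = (\<lambda>x. a * f x + b * g x) \<and> smooth f \<and> smooth g) \<or> smooth (ddir v h))"
    by blast
qed (use assms in blast)

lemma smooth_add: "smooth f \<Longrightarrow> smooth g \<Longrightarrow> smooth (\<lambda>x. f x + g x)"
  using smooth_lincomb[of f g 1 1] by simp

lemma smooth_cmult: "smooth f \<Longrightarrow> smooth (\<lambda>x. c * f x)"
  using smooth_lincomb[of f f c 0] by simp

lemma smooth_sum: "(\<And>i. i \<in> I \<Longrightarrow> smooth (f i)) \<Longrightarrow> smooth (\<lambda>x. \<Sum>i\<in>I. f i x)"
  by (induction I rule: infinite_finite_induct) (simp_all add: smooth_const smooth_add)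

lemma has_real_derivative_ddir_line:
  assumes "\<forall>y. h differentiable (at y)"
  shows "((\<lambda>t. h (y + t *\<^sub>R w)) has_real_derivative ddir w h (y + t *\<^sub>R w)) (at t)"
proof -
  have "((\<lambda>t. t *\<^sub>R w + y) has_derivative (\<lambda>r. r *\<^sub>R w)) (at t)"
    by (rule has_derivative_add_const[OF bounded_linear_imp_has_derivative[OF bounded_linear_scaleR_left]])
  from has_derivative_compose[OF this has_derivative_ddir] assms
  have "((\<lambda>t. h (y + t *\<^sub>R w)) has_derivative (\<lambda>r. ddir (r *\<^sub>R w) h (y + t *\<^sub>R w))) (at t)"
    by (simp add: add.commute)
  moreover have "linear (\<lambda>v. ddir v h (y + t *\<^sub>R w))" using assms by (intro linear_ddir) auto
  then have "(\<lambda>r. ddir (r *\<^sub>R w) h (y + t *\<^sub>R w)) = (*) (ddir w h (y + t *\<^sub>R w))"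
    by (auto simp: linear_iff)
  ultimately show ?thesis by (simp add: has_field_derivative_def)
qed

lemma mvt_ddir_line:
  assumes "\<forall>y. h differentiable (at y)" "s > 0"
  obtains t where "0 < t" "t < s" "h (y + s *\<^sub>R w) - h y = s * ddir w h (y + t *\<^sub>R w)"
  using MVT2[OF assms(2), of "\<lambda>t. h (y + t *\<^sub>R w)" "\<lambda>t. ddir w h (y + t *\<^sub>R w)"]
    has_real_derivative_ddir_line[OF assms(1)] by auto

lemma has_derivative_ddir_shift:
  assumes "f differentiable (at (z + c))"
  shows "((\<lambda>y. f (y + c)) has_derivative (\<lambda>v. ddir v f (z + c))) (at z)"
  using has_derivative_compose[OF has_derivative_add_const[OF has_derivative_ident, of c "at z"]
      has_derivative_ddir[OF assms]] by simp

lemma second_difference_mvt: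
  fixes f :: "real^'n \<Rightarrow> real"
  assumes "smooth f" "s > 0"
  obtains p where "norm (p - x) \<le> s * (norm u + norm v)"
    "f (x + s *\<^sub>R u + s *\<^sub>R v) - f (x + s *\<^sub>R u) - f (x + s *\<^sub>R v) + f x = s\<^sup>2 * ddir v (ddir u f) p"
proof -
  define h where "h = (\<lambda>y. f (y + s *\<^sub>R v) - f y)"
  have fd: "\<forall>y. f differentiable (at y)" using assms(1) smooth_differentiable by blast
  have hd: "(h has_derivative (\<lambda>k. ddir k f (z + s *\<^sub>R v) - ddir k f z)) (at z)" for z
    unfolding h_def using fd by (intro has_derivative_diff has_derivative_ddir_shift has_derivative_ddir) auto
  then have "\<forall>y. h differentiable (at y)" using differentiable_def by blast
  then obtain t where t: "0 < t" "t < s" "h (x + s *\<^sub>R u) - h x = s * ddir u h (x + t *\<^sub>R u)"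
    using mvt_ddir_line assms(2) by metis
  have "\<forall>y. ddir u f differentiable (at y)"
    using smooth_differentiable[OF smooth_ddir[OF assms(1)]] by blast
  then obtain r where r: "0 < r" "r < s"
    "ddir u f (x + t *\<^sub>R u + s *\<^sub>R v) - ddir u f (x + t *\<^sub>R u)
      = s * ddir v (ddir u f) (x + t *\<^sub>R u + r *\<^sub>R v)"
    using mvt_ddir_line assms(2) by metis
  define p where "p = x + t *\<^sub>R u + r *\<^sub>R v"
  have "p - x = t *\<^sub>R u + r *\<^sub>R v" unfolding p_def by simp
  then have "norm (p - x) \<le> norm (t *\<^sub>R u) + norm (r *\<^sub>R v)"
    by (metis norm_triangle_ineq)
  also have "\<dots> = t * norm u + r * norm v" using t r by simp
  also have "\<dots> \<le> s * norm u + s * norm v"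
    using t r by (intro add_mono mult_right_mono) auto
  finally have "norm (p - x) \<le> s * (norm u + norm v)" by (simp add: algebra_simps)
  moreover have "f (x + s *\<^sub>R u + s *\<^sub>R v) - f (x + s *\<^sub>R u) - f (x + s *\<^sub>R v) + f x
      = h (x + s *\<^sub>R u) - h x" unfolding h_def by simp
  then have "f (x + s *\<^sub>R u + s *\<^sub>R v) - f (x + s *\<^sub>R u) - f (x + s *\<^sub>R v) + f x
      = s\<^sup>2 * ddir v (ddir u f) p"
    using t(3) ddir_eqI[OF hd] r(3) unfolding p_def by (simp add: power2_eq_square)
  ultimately show ?thesis using that by blast
qed

text \<open>Schwarz's theorem: both mixed derivatives are limits of the same second difference quotient.\<close>
lemma ddir_commute:
  fixes f :: "real^'n \<Rightarrow> real"
  assumes "smooth f"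
  shows "ddir u (ddir v f) x = ddir v (ddir u f) x"
proof (rule ccontr)
  define A where "A = ddir v (ddir u f)"
  define B where "B = ddir u (ddir v f)"
  assume "ddir u (ddir v f) x \<noteq> ddir v (ddir u f) x"
  then have e: "\<bar>A x - B x\<bar> / 2 > 0" unfolding A_def B_def by simp
  have "continuous (at x) A" "continuous (at x) B" unfolding A_def B_def
    by (intro differentiable_imp_continuous_within smooth_differentiable smooth_ddir assms)+
  then obtain d1 d2 where d: "d1 > 0" "\<forall>y. dist y x < d1 \<longrightarrow> dist (A y) (A x) < \<bar>A x - B x\<bar> / 2"
      "d2 > 0" "\<forall>y. dist y x < d2 \<longrightarrow> dist (B y) (B x) < \<bar>A x - B x\<bar> / 2"
    using e unfolding continuous_at_eps_delta by metis
  define s where "s = min d1 d2 / (norm u + norm v + 1)"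
  have pos: "norm u + norm v + 1 > 0" using norm_ge_zero[of u] norm_ge_zero[of v] by linarith
  have s: "s > 0" using d pos unfolding s_def by simp
  have "s * (norm u + norm v) < s * (norm u + norm v + 1)" using s by simp
  then have sb: "s * (norm u + norm v) < min d1 d2" unfolding s_def using pos by simp
  obtain p where p: "norm (p - x) \<le> s * (norm u + norm v)"
    "f (x + s *\<^sub>R u + s *\<^sub>R v) - f (x + s *\<^sub>R u) - f (x + s *\<^sub>R v) + f x = s\<^sup>2 * A p"
    using second_difference_mvt[OF assms s, of x u v] unfolding A_def by blast
  obtain q where q: "norm (q - x) \<le> s * (norm v + norm u)"
    "f (x + s *\<^sub>R v + s *\<^sub>R u) - f (x + s *\<^sub>R v) - f (x + s *\<^sub>R u) + f x = s\<^sup>2 * B q"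
    using second_difference_mvt[OF assms s, of x v u] unfolding B_def by blast
  have "A p = B q" using p(2) q(2) s by (simp add: algebra_simps)
  moreover have "dist p x < d1" "dist q x < d2" using p(1) q(1) sb by (auto simp: dist_norm algebra_simps)
  then have "dist (A p) (A x) < \<bar>A x - B x\<bar> / 2" "dist (B q) (B x) < \<bar>A x - B x\<bar> / 2"
    using d by auto
  ultimately show False by (simp add: dist_real_def abs_if split: if_splits)
qed

lemma dirs_Nil [simp]: "dirs [] f = f"
  by (simp add: dirs_def)

lemma dirs_Cons [simp]: "dirs (v # vs) f = ddir v (dirs vs f)"
  by (simp add: dirs_def)

lemma dirs_append: "dirs (xs @ ys) f = dirs xs (dirs ys f)"
  by (simp add: dirs_def)

lemma smooth_dirs: "smooth f \<Longrightarrow> smooth (dirs vs f)"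
  by (induction vs) (auto simp: smooth_ddir)

lemma dirs_ddir_commute:
  fixes f :: "real^'n \<Rightarrow> real"
  assumes "smooth f"
  shows "dirs vs (ddir v f) = ddir v (dirs vs f)"
proof (induction vs)
  case (Cons u vs)
  have "ddir u (ddir v (dirs vs f)) = ddir v (ddir u (dirs vs f))"
    by (rule ext, rule ddir_commute[OF smooth_dirs[OF assms]])
  with Cons show ?case by simp
qed simp

lemma dirs_mset_eq:
  fixes f :: "real^'n \<Rightarrow> real"
  assumes "smooth f" "mset vs = mset ws"
  shows "dirs vs f = dirs ws f"
  using assms(2)
proof (induction vs arbitrary: ws)
  case (Cons v vs)
  then have "v \<in> set ws" by (metis list.set_intros(1) set_mset_mset)
  then obtain ws1 ws2 where ws: "ws = ws1 @ v # ws2" by (meson split_list)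
  with Cons have "dirs vs f = dirs (ws1 @ ws2) f" by simp
  then show ?case
    by (simp add: ws dirs_append dirs_ddir_commute[OF smooth_dirs[OF assms(1)]])
qed simp

lemma dirs_lincomb:
  assumes "smooth f" "smooth g"
  shows "dirs vs (\<lambda>x. a * f x + b * g x) = (\<lambda>x. a * dirs vs f x + b * dirs vs g x)"
proof (induction vs)
  case (Cons v vs)
  have "\<forall>x. dirs vs f differentiable (at x)" "\<forall>x. dirs vs g differentiable (at x)"
    using smooth_differentiable smooth_dirs assms by blast+
  with Cons show ?case using ddir_lincomb by simp
qed simp

lemma dirs_zero: "dirs vs (\<lambda>x. 0) = (\<lambda>x. 0)"
  using dirs_lincomb[OF smooth_const smooth_const, of vs 0 0 0 0] by simp

lemma dirs_sum:
  assumes "\<And>i. i \<in> I \<Longrightarrow> smooth (f i)"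
  shows "dirs vs (\<lambda>x. \<Sum>i\<in>I. c i * f i x) = (\<lambda>x. \<Sum>i\<in>I. c i * dirs vs (f i) x)"
  using assms
proof (induction I rule: infinite_finite_induct)
  case (insert i I)
  have "smooth (\<lambda>x. \<Sum>i\<in>I. c i * f i x)"
    using insert.prems by (intro smooth_sum smooth_cmult) auto
  with insert dirs_lincomb[of "f i" "\<lambda>x. \<Sum>i\<in>I. c i * f i x" vs "c i" 1] show ?case
    by simp
qed (simp_all add: dirs_zero)

lemma coord_list: "set (coord_list :: 'n::finite list) = UNIV" "distinct (coord_list :: 'n::finite list)"
proof -
  have "\<exists>xs::'n list. set xs = UNIV \<and> distinct xs"
    using finite_distinct_list[of "UNIV :: 'n set"] by simp
  then have "set (coord_list :: 'n list) = UNIV \<and> distinct (coord_list :: 'n list)"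
    unfolding coord_list_def by (rule someI_ex)
  then show "set (coord_list :: 'n list) = UNIV" "distinct (coord_list :: 'n list)" by auto
qed

definition mono_dirs :: "('n::finite \<Rightarrow>\<^sub>0 nat) \<Rightarrow> (real^'n) list" where
  "mono_dirs m = concat (map (\<lambda>i. replicate (Poly_Mapping.lookup m i) (axis i 1)) coord_list)"

lemma dmon_eq_dirs: "dmon m f = dirs (mono_dirs m) f"
  by (simp add: dmon_def mono_dirs_def)

lemma mset_mono_dirs:
  "mset (mono_dirs m) = (\<Sum>i\<in>UNIV. replicate_mset (Poly_Mapping.lookup m i) (axis i 1))"
proof -
  have "mset (mono_dirs m)
      = sum_list (map (\<lambda>i. replicate_mset (Poly_Mapping.lookup m i) (axis i 1)) coord_list)"
    unfolding mono_dirs_def mset_concat by (simp add: o_def)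
  also have "\<dots> = (\<Sum>i\<in>set coord_list. replicate_mset (Poly_Mapping.lookup m i) (axis i 1))"
    by (rule sum_list_distinct_conv_sum_set[OF coord_list(2)])
  finally show ?thesis by (simp add: coord_list(1))
qed

lemma smooth_dmon: "smooth f \<Longrightarrow> smooth (dmon m f)"
  by (simp add: dmon_eq_dirs smooth_dirs)

lemma dmon_add: "smooth f \<Longrightarrow> dmon (a + b) f = dmon a (dmon b f)"
proof -
  assume f: "smooth f"
  have "replicate_mset (x + y) v = replicate_mset x v + replicate_mset y v" for x y and v :: "real^'a"
    by (induction x) auto
  then have "mset (mono_dirs (a + b)) = mset (mono_dirs a @ mono_dirs b)"
    by (simp add: mset_mono_dirs lookup_add sum.distrib)
  then show ?thesis unfolding dmon_eq_dirs dirs_append[symmetric] using dirs_mset_eq[OF f] by blast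
qed

lemma dmon_0: "dmon 0 f = f"
  by (simp add: dmon_def map_replicate_const)

lemma dmon_single_var: "smooth f \<Longrightarrow> dmon (Poly_Mapping.single i 1) f = ddir (axis i 1) f"
proof -
  assume f: "smooth f"
  have e: "(\<lambda>j. replicate_mset (Poly_Mapping.lookup (Poly_Mapping.single i 1) j) (axis j 1))
      = (\<lambda>j. if j = i then {#axis i 1#} else 0)"
    by (auto simp: lookup_single when_def)
  have "mset (mono_dirs (Poly_Mapping.single i 1)) = mset [axis i 1]"
    unfolding mset_mono_dirs e by simp
  then show ?thesis unfolding dmon_eq_dirs using dirs_mset_eq[OF f] by fastforce
qed

lemma dmon_zero: "dmon m (\<lambda>x. 0) = (\<lambda>x. 0)"
  by (simp add: dmon_eq_dirs dirs_zero)

lemma pact_superset: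
  assumes "finite K" "Poly_Mapping.keys p \<subseteq> K"
  shows "pact p f x = (\<Sum>m\<in>K. Poly_Mapping.lookup p m * dmon m f x)"
  unfolding pact_def by (rule sum.mono_neutral_left[OF assms]) (auto simp: in_keys_iff)

lemma pact_add: "pact (p + q) f = (\<lambda>x. pact p f x + pact q f x)"
proof
  fix x
  define K where "K = Poly_Mapping.keys p \<union> Poly_Mapping.keys q"
  have "finite K" "Poly_Mapping.keys (p + q) \<subseteq> K" "Poly_Mapping.keys p \<subseteq> K" "Poly_Mapping.keys q \<subseteq> K"
    unfolding K_def using keys_add[of p q] by auto
  then show "pact (p + q) f x = pact p f x + pact q f x"
    by (simp add: pact_superset lookup_add algebra_simps sum.distrib)
qed

lemma pact_0: "pact 0 f = (\<lambda>x. 0)"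
  by (simp add: pact_def)

lemma pact_single: "pact (Poly_Mapping.single m c) f = (\<lambda>x. c * dmon m f x)"
  using pact_superset[of "{m}" "Poly_Mapping.single m c" f] by auto

lemma pact_sum: "pact (\<Sum>i\<in>I. p i) f = (\<lambda>x. \<Sum>i\<in>I. pact (p i) f x)"
  by (induction I rule: infinite_finite_induct) (simp_all add: pact_0 pact_add)

lemma pact_zero: "pact p (\<lambda>x. 0) = (\<lambda>x. 0)"
  by (simp add: pact_def dmon_zero)

lemma pact_lincomb:
  assumes "smooth f" "smooth g"
  shows "pact p (\<lambda>x. a * f x + b * g x) = (\<lambda>x. a * pact p f x + b * pact p g x)"
  using dirs_lincomb[OF assms]
  by (simp add: pact_def dmon_eq_dirs algebra_simps sum.distrib sum_distrib_left)

lemma sum_single_lookup: "(\<Sum>m\<in>Poly_Mapping.keys p. Poly_Mapping.single m (Poly_Mapping.lookup p m)) = p"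
  by (rule poly_mapping_eqI) (simp add: lookup_sum lookup_single when_def in_keys_iff)

lemma pact_mult:
  assumes f: "smooth f"
  shows "pact (p * q) f = pact p (pact q f)"
proof
  fix x
  let ?P = "Poly_Mapping.keys p" and ?Q = "Poly_Mapping.keys q"
  have "p * q = (\<Sum>a\<in>?P. \<Sum>b\<in>?Q.
      Poly_Mapping.single (a + b) (Poly_Mapping.lookup p a * Poly_Mapping.lookup q b))"
    by (subst (1 2) sum_single_lookup[symmetric]) (simp add: sum_product mult_single)
  then have "pact (p * q) f x = (\<Sum>a\<in>?P. Poly_Mapping.lookup p a *
      (\<Sum>b\<in>?Q. Poly_Mapping.lookup q b * dmon a (dmon b f) x))"
    by (simp add: pact_sum pact_single dmon_add[OF f] sum_distrib_left mult.assoc)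
  also have "\<dots> = (\<Sum>a\<in>?P. Poly_Mapping.lookup p a * dmon a (pact q f) x)"
    using dirs_sum[of ?Q "\<lambda>b. dmon b f"] smooth_dmon[OF f]
    by (simp add: pact_def[of q f] dmon_eq_dirs)
  also have "\<dots> = pact p (pact q f) x" by (simp add: pact_def)
  finally show "pact (p * q) f x = pact p (pact q f) x" .
qed

lemma pact_pconst: "pact (pconst c * p) f = (\<lambda>x. c * pact p f x)"
proof -
  have "pconst c * p = (\<Sum>m\<in>Poly_Mapping.keys p. Poly_Mapping.single m (c * Poly_Mapping.lookup p m))"
    by (subst sum_single_lookup[symmetric]) (simp add: sum_distrib_left pconst_def mult_single)
  then have "pact (pconst c * p) f = (\<lambda>x. \<Sum>m\<in>Poly_Mapping.keys p. c * Poly_Mapping.lookup p m * dmon m f x)"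
    by (simp add: pact_sum pact_single)
  then show ?thesis by (simp add: pact_def sum_distrib_left mult.assoc)
qed

lemma pact_1: "pact 1 f = f"
  using pact_single[of 0 1 f] by (simp add: dmon_0)

lemma pconst_0 [simp]: "pconst 0 = 0"
  by (simp add: pconst_def)

lemma pconst_add: "pconst (a + b) = pconst a + pconst b"
  by (simp add: pconst_def single_add)

lemma pconst_mult: "pconst (a * b) = pconst a * pconst b"
  by (simp add: pconst_def mult_single)

lemma lin_eq_sum_single: "lin v = (\<Sum>i\<in>UNIV. Poly_Mapping.single (Poly_Mapping.single i 1) (v $ i))"
  by (simp add: lin_def pconst_def pvar_def mult_single)

lemma lin_0 [simp]: "lin 0 = 0"
  by (simp add: lin_def)

lemma lin_add: "lin (a + b) = lin a + lin b"
  by (simp add: lin_def pconst_add algebra_simps sum.distrib)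

lemma lin_scaleR: "lin (c *\<^sub>R a) = pconst c * lin a"
  by (simp add: lin_def pconst_mult sum_distrib_left mult.assoc)

lemma lin_sum_scaleR: "lin (\<Sum>j\<in>J. c j *\<^sub>R w j) = (\<Sum>j\<in>J. pconst (c j) * lin (w j))"
  by (induction J rule: infinite_finite_induct) (simp_all add: lin_add lin_scaleR)

lemma lin_axis: "lin (axis i 1 :: real^'n::finite) = pvar i"
proof -
  have "lin (axis i 1 :: real^'n) = (\<Sum>j\<in>UNIV. if j = i then pvar i else 0)"
    unfolding lin_def by (rule sum.cong) (auto simp: axis_def pconst_def)
  then show ?thesis by simp
qed

lemma pvar_power: "pvar i ^ n = Poly_Mapping.single (Poly_Mapping.single i n) (1::real)"
  by (induction n) (simp_all add: pvar_def mult_single single_add[symmetric])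

lemma prod_list_lin_mono_dirs:
  fixes m :: "'n::finite \<Rightarrow>\<^sub>0 nat"
  shows "prod_list (map lin (mono_dirs m)) = Poly_Mapping.single m (1::real)"
proof -
  have "prod_list (map lin (concat (map (\<lambda>i. replicate (l i) (axis i 1)) is)))
      = (\<Prod>i\<leftarrow>is. pvar i ^ l i)" for "is" and l :: "'n \<Rightarrow> nat"
    by (induction "is") (simp_all add: lin_axis)
  then have "prod_list (map lin (mono_dirs m)) = (\<Prod>i\<in>UNIV. pvar i ^ Poly_Mapping.lookup m i)"
    by (simp add: mono_dirs_def prod.distinct_set_conv_list[OF coord_list(2), symmetric] coord_list(1))
  also have "\<dots> = Poly_Mapping.single (\<Sum>i\<in>UNIV. Poly_Mapping.single i (Poly_Mapping.lookup m i)) 1"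
  proof -
    have "(\<Prod>i\<in>A. Poly_Mapping.single (g i) (1::real)) = Poly_Mapping.single (sum g A) 1"
      for A :: "'n set" and g :: "'n \<Rightarrow> 'n \<Rightarrow>\<^sub>0 nat"
      by (induction A rule: infinite_finite_induct) (simp_all add: mult_single)
    then show ?thesis by (simp add: pvar_power)
  qed
  also have "(\<Sum>i\<in>UNIV. Poly_Mapping.single i (Poly_Mapping.lookup m i)) = m"
    by (rule poly_mapping_eqI) (simp add: lookup_sum lookup_single when_def)
  finally show ?thesis .
qed

lemma pact_lin:
  fixes f :: "real^'n::finite \<Rightarrow> real"
  assumes f: "smooth f"
  shows "pact (lin v) f = ddir v f"
proof
  fix x
  have "pact (lin v) f x = (\<Sum>i\<in>UNIV. v $ i * ddir (axis i 1) f x)"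
    using dmon_single_var[OF f] by (simp add: lin_eq_sum_single pact_sum pact_single)
  also have "\<dots> = ddir (\<Sum>i\<in>UNIV. (v $ i) *\<^sub>R axis i 1) f x"
    by (rule ddir_sum_scaleR[symmetric]) (rule smooth_differentiable[OF f])
  also have "(\<Sum>i\<in>UNIV. (v $ i) *\<^sub>R axis i 1) = v"
    using basis_expansion[of v] by (simp add: scalar_mult_eq_scaleR)
  finally show "pact (lin v) f x = ddir v f x" .
qed

lemma pact_prod_list_lin:
  fixes f :: "real^'n::finite \<Rightarrow> real"
  assumes "smooth f"
  shows "pact (prod_list (map lin vs)) f = dirs vs f"
  by (induction vs) (simp_all add: pact_1 pact_mult pact_lin smooth_dirs assms)

lemma pact_prodA:
  fixes f :: "real^'n::finite \<Rightarrow> real"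
  assumes "smooth f" "finite A"
  shows "pact (prodA X A) f = dirs (map (\<lambda>i. X ! i) (sorted_list_of_set A)) f"
proof -
  have "prodA X A = prod_list (map lin (map (\<lambda>i. X ! i) (sorted_list_of_set A)))"
    using assms(2) prod.distinct_set_conv_list[of "sorted_list_of_set A" "\<lambda>i. lin (X ! i)"]
    by (simp add: prodA_def o_def)
  then show ?thesis using pact_prod_list_lin[OF assms(1)] by (simp only:)
qed

lemma ideal_gen_base: "g \<in> G \<Longrightarrow> g \<in> ideal_gen G"
  unfolding ideal_gen_def by (rule CollectI, rule exI[of _ "{g}"], rule exI[of _ "\<lambda>_. 1"]) simp

lemma ideal_gen_0: "0 \<in> ideal_gen G"
  unfolding ideal_gen_def by (rule CollectI, rule exI[of _ "{}"], rule exI[of _ "\<lambda>_. 1"]) simp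

lemma ideal_gen_mult_left: "p \<in> ideal_gen G \<Longrightarrow> r * p \<in> ideal_gen G"
proof -
  assume "p \<in> ideal_gen G"
  then obtain F q where p: "p = (\<Sum>g\<in>F. q g * g)" "finite F" "F \<subseteq> G"
    unfolding ideal_gen_def by blast
  have "r * p = (\<Sum>g\<in>F. (r * q g) * g)"
    unfolding p(1) by (simp add: sum_distrib_left mult.assoc)
  then show ?thesis unfolding ideal_gen_def
    by (intro CollectI exI[of _ F] exI[of _ "\<lambda>g. r * q g"]) (use p(2,3) in simp)
qed

lemma ideal_gen_add: "p \<in> ideal_gen G \<Longrightarrow> p' \<in> ideal_gen G \<Longrightarrow> p + p' \<in> ideal_gen G"
proof -
  assume "p \<in> ideal_gen G" "p' \<in> ideal_gen G"
  then obtain F q F' q' where p: "p = (\<Sum>g\<in>F. q g * g)" "finite F" "F \<subseteq> G"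
    and p': "p' = (\<Sum>g\<in>F'. q' g * g)" "finite F'" "F' \<subseteq> G"
    unfolding ideal_gen_def by blast
  define Q where "Q g = (if g \<in> F then q g else 0) + (if g \<in> F' then q' g else 0)" for g
  have fin: "finite (F \<union> F')" using p(2) p'(2) by simp
  have "(\<Sum>g\<in>F \<union> F'. Q g * g)
      = (\<Sum>g\<in>F \<union> F'. (if g \<in> F then q g else 0) * g) + (\<Sum>g\<in>F \<union> F'. (if g \<in> F' then q' g else 0) * g)"
    unfolding Q_def by (simp add: algebra_simps sum.distrib)
  also have "(\<Sum>g\<in>F \<union> F'. (if g \<in> F then q g else 0) * g) = p"
    unfolding p(1) by (rule sum.mono_neutral_cong_right[OF fin]) auto
  also have "(\<Sum>g\<in>F \<union> F'. (if g \<in> F' then q' g else 0) * g) = p'"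
    unfolding p'(1) by (rule sum.mono_neutral_cong_right[OF fin]) auto
  finally show ?thesis unfolding ideal_gen_def
    by (intro CollectI exI[of _ "F \<union> F'"] exI[of _ Q]) (use fin p(3) p'(3) in simp)
qed

lemma ideal_gen_sum: "(\<And>i. i \<in> I \<Longrightarrow> p i \<in> ideal_gen G) \<Longrightarrow> (\<Sum>i\<in>I. p i) \<in> ideal_gen G"
  by (induction I rule: infinite_finite_induct) (simp_all add: ideal_gen_0 ideal_gen_add)

lemma pact_ideal_gen:
  assumes f: "smooth f" and G: "\<And>g. g \<in> G \<Longrightarrow> pact g f = (\<lambda>x. 0)" and p: "p \<in> ideal_gen G"
  shows "pact p f = (\<lambda>x. 0)"
proof -
  obtain F q where p: "p = (\<Sum>g\<in>F. q g * g)" "F \<subseteq> G"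
    using p unfolding ideal_gen_def by blast
  have "pact (q g * g) f = (\<lambda>x. 0)" if "g \<in> F" for g
    using that p(2) G by (simp add: pact_mult[OF f] pact_zero subset_iff)
  then show ?thesis unfolding p(1) pact_sum by simp
qed

lemma span_image_eq_sum_scaleR:
  fixes f :: "'i \<Rightarrow> 'a::real_vector"
  assumes "finite A" "x \<in> span (f ` A)"
  shows "\<exists>c. x = (\<Sum>j\<in>A. c j *\<^sub>R f j)"
  using assms(2)
proof (induction rule: span_induct_alt)
  case base
  show ?case by (rule exI[of _ "\<lambda>_. 0"]) simp
next
  case (step a x y)
  then obtain j0 where j0: "j0 \<in> A" "x = f j0" by blast
  from step obtain d where d: "y = (\<Sum>j\<in>A. d j *\<^sub>R f j)" by blast
  have "a *\<^sub>R x + y = (\<Sum>j\<in>A. (d j + (if j = j0 then a else 0)) *\<^sub>R f j)"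
    unfolding d j0(2) using j0(1) assms(1)
    by (simp add: scaleR_add_left sum.distrib if_distrib[of "\<lambda>t. t *\<^sub>R f _"] cong: if_cong)
  then show ?case by (intro exI[of _ "\<lambda>j. d j + (if j = j0 then a else 0)"])
qed

lemma hyperplane_through_nonspanning_subset:
  fixes X :: "('a::euclidean_space) set"
  assumes "U \<subseteq> X" "span U \<noteq> UNIV" "span X = UNIV"
  obtains S where "S \<subseteq> X" "U \<subseteq> span S" "dim (span S) = DIM('a) - 1"
proof -
  obtain B0 where B0: "B0 \<subseteq> U" "independent B0" "U \<subseteq> span B0"
    using maximal_independent_subset[of U] by blast
  obtain B where B: "B0 \<subseteq> B" "B \<subseteq> X" "independent B" "X \<subseteq> span B"
    using maximal_independent_subset_extend[of B0 X] B0 assms(1) by blast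
  have spB: "span B = UNIV"
    using B(4) assms(3) by (metis span_mono span_span top.extremum_uniqueI)
  then have cB: "card B = DIM('a)"
    using dim_span_eq_card_independent[OF B(3)] by simp
  have "B0 \<noteq> B"
  proof
    assume "B0 = B"
    then have "span U = UNIV" using B0 spB
      by (metis span_minimal span_mono subset_antisym subset_UNIV subspace_span)
    then show False using assms(2) by simp
  qed
  then obtain b where b: "b \<in> B" "b \<notin> B0" using B(1) by blast
  have "independent (B - {b})" using B(3) by (rule independent_mono) auto
  then have "dim (span (B - {b})) = card (B - {b})" by (rule dim_span_eq_card_independent)
  also have "\<dots> = DIM('a) - 1" using cB b(1) independent_imp_finite[OF B(3)] by simp
  finally have "dim (span (B - {b})) = DIM('a) - 1" .
  moreover have "U \<subseteq> span (B - {b})"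
    using B0(3) B(1) b span_mono[of B0 "B - {b}"] by blast
  ultimately show ?thesis using that B(2) by blast
qed

lemma prod_power_fun_upd_Suc:
  fixes g :: "'i \<Rightarrow> 'a::comm_monoid_mult"
  assumes "finite A" "j \<in> A"
  shows "(\<Prod>k\<in>A. g k ^ (\<mu>(j := Suc (\<mu> j))) k) = g j * (\<Prod>k\<in>A. g k ^ \<mu> k)"
proof -
  have "(\<Prod>k\<in>A. g k ^ (\<mu>(j := Suc (\<mu> j))) k) = (\<Prod>k\<in>A. (if k = j then g k else 1) * g k ^ \<mu> k)"
    by (rule prod.cong) auto
  then show ?thesis by (simp add: prod.distrib prod.delta[OF assms(1)] assms(2))
qed

lemma sum_fun_upd_Suc:
  assumes "finite A" "j \<in> A"
  shows "sum (\<mu>(j := Suc (\<mu> j))) A = Suc (sum \<mu> A)"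
proof -
  have "sum (\<mu>(j := Suc (\<mu> j))) A = (\<Sum>k\<in>A. (if k = j then 1 else 0) + \<mu> k)"
    by (rule sum.cong) auto
  then show ?thesis by (simp add: sum.distrib sum.delta[OF assms(1)] assms(2))
qed

lemma exists_ge_2_if_card_less_sum:
  fixes \<mu> :: "'a \<Rightarrow> nat"
  assumes "card A < sum \<mu> A"
  shows "\<exists>j\<in>A. 2 \<le> \<mu> j"
proof (rule ccontr)
  assume "\<not> ?thesis"
  then have "sum \<mu> A \<le> card A" using sum_bounded_above[of A \<mu> 1] by fastforce
  with assms show False by simp
qed

definition Xmon :: "(real^'n) list \<Rightarrow> (nat \<Rightarrow> nat) \<Rightarrow> 'n::finite spoly" where
  "Xmon X \<mu> = (\<Prod>j<length X. lin (X ! j) ^ \<mu> j)"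

lemma Xmon_fun_upd_Suc: "j < length X \<Longrightarrow> Xmon X (\<mu>(j := Suc (\<mu> j))) = lin (X ! j) * Xmon X \<mu>"
  unfolding Xmon_def by (rule prod_power_fun_upd_Suc) auto

lemma lin_mult_Xmon:
  assumes "Z \<subseteq> {..<length X}"
  shows "lin (\<Sum>j\<in>Z. c j *\<^sub>R X ! j) * Xmon X \<mu> = (\<Sum>j\<in>Z. pconst (c j) * Xmon X (\<mu>(j := Suc (\<mu> j))))"
  unfolding lin_sum_scaleR sum_distrib_right
  by (rule sum.cong) (use assms in \<open>auto simp: Xmon_fun_upd_Suc mult.assoc\<close>)

lemma Xmon_in_ideal_if_zeros_not_spanning:
  fixes X :: "(real^'n::finite) list"
  assumes spans: "span (set X) = UNIV" and T_cocirc: "\<And>C. cocircuit X C \<Longrightarrow> C \<in> T"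
    and zeros: "span ((\<lambda>j. X ! j) ` {j. j < length X \<and> \<mu> j = 0}) \<noteq> UNIV"
  shows "Xmon X \<mu> \<in> ideal_gen (prodA X ` T)"
proof -
  have "(\<lambda>j. X ! j) ` {j. j < length X \<and> \<mu> j = 0} \<subseteq> set X" by auto
  then obtain S where S: "S \<subseteq> set X" "(\<lambda>j. X ! j) ` {j. j < length X \<and> \<mu> j = 0} \<subseteq> span S"
      "dim (span S) = DIM(real^'n) - 1"
    using hyperplane_through_nonspanning_subset[OF _ zeros spans] by blast
  define C where "C = {i. i < length X \<and> X ! i \<notin> span S}"
  have "C \<in> T" using T_cocirc S(1,3) unfolding cocircuit_def C_def by auto
  have C_pos: "0 < \<mu> j" if "j \<in> C" for j
    using that S(2) unfolding C_def by (auto intro: gr0I)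
  define \<nu> where "\<nu> j = (if j \<in> C then \<mu> j - 1 else \<mu> j)" for j
  have "Xmon X \<mu> = (\<Prod>j<length X. (if j \<in> C then lin (X ! j) else 1) * lin (X ! j) ^ \<nu> j)"
    unfolding Xmon_def
  proof (rule prod.cong)
    show "lin (X ! j) ^ \<mu> j = (if j \<in> C then lin (X ! j) else 1) * lin (X ! j) ^ \<nu> j" for j
      using C_pos[of j] by (cases "\<mu> j") (auto simp: \<nu>_def)
  qed simp
  also have "\<dots> = Xmon X \<nu> * (\<Prod>j\<in>{..<length X} \<inter> C. lin (X ! j))"
    by (simp add: prod.distrib Xmon_def prod.inter_restrict mult.commute)
  also have "{..<length X} \<inter> C = C" unfolding C_def by auto
  finally have "Xmon X \<mu> = Xmon X \<nu> * prodA X C" by (simp add: prodA_def)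
  then show ?thesis using \<open>C \<in> T\<close> by (simp add: ideal_gen_mult_left ideal_gen_base)
qed

text \<open>
  Induction on the number of unused vectors: if they span, a factor occurring at least twice
  (pigeonhole) is rewritten as a combination of unused vectors.
\<close>
lemma Xmon_in_ideal:
  fixes X :: "(real^'n::finite) list"
  assumes spans: "span (set X) = UNIV" and T_cocirc: "\<And>C. cocircuit X C \<Longrightarrow> C \<in> T"
  shows "length X < sum \<mu> {..<length X} \<Longrightarrow> Xmon X \<mu> \<in> ideal_gen (prodA X ` T)"
proof (induction "card {j. j < length X \<and> \<mu> j = 0}" arbitrary: \<mu> rule: less_induct)
  case less
  define Z where "Z = {j. j < length X \<and> \<mu> j = 0}"
  have "finite Z" unfolding Z_def by simp
  show ?case
  proof (cases "span ((\<lambda>j. X ! j) ` Z) = UNIV")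
    case False
    then show ?thesis
      using Xmon_in_ideal_if_zeros_not_spanning[OF spans T_cocirc] unfolding Z_def by blast
  next
    case True
    obtain j0 where j0: "j0 < length X" "2 \<le> \<mu> j0"
      using exists_ge_2_if_card_less_sum[of "{..<length X}" \<mu>] less.prems by auto
    obtain c where c: "X ! j0 = (\<Sum>j\<in>Z. c j *\<^sub>R X ! j)"
      using span_image_eq_sum_scaleR[where A = Z and f = "\<lambda>j. X ! j" and x = "X ! j0"] True
      by (auto simp: Z_def)
    define \<mu>' where "\<mu>' = \<mu>(j0 := \<mu> j0 - 1)"
    have \<mu>: "\<mu> = \<mu>'(j0 := Suc (\<mu>' j0))" unfolding \<mu>'_def using j0 by auto
    have "Xmon X \<mu> = lin (X ! j0) * Xmon X \<mu>'"
      by (subst \<mu>) (rule Xmon_fun_upd_Suc[OF j0(1)])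
    also have "\<dots> = (\<Sum>j\<in>Z. pconst (c j) * Xmon X (\<mu>'(j := Suc (\<mu>' j))))"
      unfolding c by (rule lin_mult_Xmon) (auto simp: Z_def)
    finally have Xmon_\<mu>: "Xmon X \<mu> = (\<Sum>j\<in>Z. pconst (c j) * Xmon X (\<mu>'(j := Suc (\<mu>' j))))" .
    have sum_\<mu>: "sum \<mu> {..<length X} = Suc (sum \<mu>' {..<length X})"
      using sum_fun_upd_Suc[where A = "{..<length X}" and j = j0 and \<mu> = \<mu>'] j0(1)
      unfolding \<mu>[symmetric] by simp
    have "Xmon X (\<mu>'(j := Suc (\<mu>' j))) \<in> ideal_gen (prodA X ` T)" if "j \<in> Z" for j
    proof (rule less.hyps)
      have "{k. k < length X \<and> (\<mu>'(j := Suc (\<mu>' j))) k = 0} = Z - {j}"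
        using j0 unfolding Z_def \<mu>'_def by auto
      then show "card {k. k < length X \<and> (\<mu>'(j := Suc (\<mu>' j))) k = 0}
          < card {j. j < length X \<and> \<mu> j = 0}"
        using card_Diff1_less[OF \<open>finite Z\<close> that] by (simp add: Z_def)
      have "sum (\<mu>'(j := Suc (\<mu>' j))) {..<length X} = Suc (sum \<mu>' {..<length X})"
        using that by (intro sum_fun_upd_Suc) (auto simp: Z_def)
      then show "length X < sum (\<mu>'(j := Suc (\<mu>' j))) {..<length X}"
        using less.prems sum_\<mu> by simp
    qed
    then show ?thesis unfolding Xmon_\<mu> by (intro ideal_gen_sum ideal_gen_mult_left)
  qed
qed

lemma Xmon_mult_prod_list_lin_in_ideal:
  fixes X :: "(real^'n::finite) list"
  assumes spans: "span (set X) = UNIV" and T_cocirc: "\<And>C. cocircuit X C \<Longrightarrow> C \<in> T"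
  shows "length X < sum \<mu> {..<length X} + length ws \<Longrightarrow>
    Xmon X \<mu> * prod_list (map lin ws) \<in> ideal_gen (prodA X ` T)"
proof (induction ws arbitrary: \<mu>)
  case Nil
  then show ?case using Xmon_in_ideal[OF spans T_cocirc] by simp
next
  case (Cons w ws)
  have "set X = (\<lambda>j. X ! j) ` {..<length X}" by (auto simp: set_conv_nth)
  then obtain c where c: "w = (\<Sum>j<length X. c j *\<^sub>R X ! j)"
    using span_image_eq_sum_scaleR[where A = "{..<length X}" and f = "\<lambda>j. X ! j" and x = w] spans by auto
  have "Xmon X \<mu> * prod_list (map lin (w # ws)) = (lin w * Xmon X \<mu>) * prod_list (map lin ws)"
    by (simp add: ac_simps)
  also have "\<dots> = (\<Sum>j<length X. pconst (c j) * (Xmon X (\<mu>(j := Suc (\<mu> j))) * prod_list (map lin ws)))"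
    unfolding c lin_mult_Xmon[OF order_refl] by (simp add: sum_distrib_right mult.assoc)
  also have "\<dots> \<in> ideal_gen (prodA X ` T)"
  proof (rule ideal_gen_sum, rule ideal_gen_mult_left, rule Cons.IH)
    fix j assume "j \<in> {..<length X}"
    then have "sum (\<mu>(j := Suc (\<mu> j))) {..<length X} = Suc (sum \<mu> {..<length X})"
      by (intro sum_fun_upd_Suc) auto
    with Cons.prems show "length X < sum (\<mu>(j := Suc (\<mu> j))) {..<length X} + length ws"
      by simp
  qed
  finally show ?case .
qed

lemma prod_list_lin_in_ideal:
  fixes X :: "(real^'n::finite) list"
  assumes "span (set X) = UNIV" "\<And>C. cocircuit X C \<Longrightarrow> C \<in> T" "length X < length ws"
  shows "prod_list (map lin ws) \<in> ideal_gen (prodA X ` T)"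
  using Xmon_mult_prod_list_lin_in_ideal[OF assms(1,2), of "\<lambda>_. 0" ws] assms(3)
  by (simp add: Xmon_def)

text \<open>
  Taylor expansion along the segment from 0 to x: the terms at 0 vanish by hypothesis, and the
  remainder because lin x ^ (|X| + 1) lies in the ideal.
\<close>
lemma eq_0_if_derivatives_at_0_vanish:
  fixes X :: "(real^'n::finite) list" and h :: "real^'n \<Rightarrow> real"
  assumes spans: "span (set X) = UNIV" and T_cocirc: "\<And>C. cocircuit X C \<Longrightarrow> C \<in> T"
    and h: "smooth h"
    and killed: "\<And>p. p \<in> ideal_gen (prodA X ` T) \<Longrightarrow> pact p h = (\<lambda>x. 0)"
    and at_0: "\<And>q. pact q h 0 = 0"
  shows "h x = 0"
proof -
  define N where "N = Suc (length X)"
  define D where "D k t = pact (lin x ^ k) h (t *\<^sub>R x)" for k t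
  have D_eq: "D k t = dirs (replicate k x) h (0 + t *\<^sub>R x)" for k t
    using pact_prod_list_lin[OF h, of "replicate k x"] by (simp add: D_def)
  have "(D k has_real_derivative D (Suc k) t) (at t)" for k t
    unfolding D_eq
    using has_real_derivative_ddir_line[of "dirs (replicate k x) h" 0 x t] smooth_differentiable[OF smooth_dirs[OF h]]
    by simp
  then obtain t where "D 0 1 = (\<Sum>m<N. D m 0 / fact m * 1 ^ m) + D N t / fact N * 1 ^ N"
    using Maclaurin[of 1 N D "D 0"] unfolding N_def by auto
  moreover have "D m 0 = 0" for m
    using at_0 by (simp add: D_def)
  moreover have "lin x ^ N \<in> ideal_gen (prodA X ` T)"
    using prod_list_lin_in_ideal[OF spans T_cocirc, of "replicate N x"] by (simp add: N_def)
  then have "D N t = 0" using killed by (simp add: D_def)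
  ultimately show "h x = 0" by (simp add: D_def pact_1)
qed

locale spoly_functional =
  fixes \<phi> :: "'n::finite spoly \<Rightarrow> real" and M :: nat
  assumes add: "\<And>p q. \<phi> (p + q) = \<phi> p + \<phi> q"
    and pconst_mult: "\<And>c p. \<phi> (pconst c * p) = c * \<phi> p"
    and kills_powers: "\<And>p v x. \<phi> (p * lin v * lin x ^ M) = 0"
begin

lemma zero: "\<phi> 0 = 0"
  using pconst_mult[of 0 0] by simp

lemma sum: "\<phi> (\<Sum>i\<in>A. p i) = (\<Sum>i\<in>A. \<phi> (p i))"
  by (induction A rule: infinite_finite_induct) (simp_all add: zero add)

lemma lin_mult: "\<phi> (lin y * q) = (\<Sum>i\<in>UNIV. y $ i * \<phi> (pvar i * q))"
proof -
  have "lin y * q = (\<Sum>i\<in>UNIV. pconst (y $ i) * (pvar i * q))"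
    unfolding lin_def sum_distrib_right by (simp add: ac_simps)
  then show ?thesis by (simp add: sum pconst_mult)
qed

lemma has_derivative_power_lin:
  "((\<lambda>x. \<phi> (p * lin x ^ k)) has_derivative (\<lambda>h. of_nat k * \<phi> (p * lin h * lin x ^ (k - 1)))) (at x)"
proof (induction k arbitrary: p)
  case (Suc k)
  have "((\<lambda>x. x $ i * \<phi> (pvar i * p * lin x ^ k)) has_derivative
      (\<lambda>h. x $ i * (of_nat k * \<phi> (pvar i * p * lin h * lin x ^ (k - 1))) + h $ i * \<phi> (pvar i * p * lin x ^ k))) (at x)"
    for i
    by (intro has_derivative_mult bounded_linear_imp_has_derivative bounded_linear_vec_nth Suc.IH)
  then have "((\<lambda>x. \<Sum>i\<in>UNIV. x $ i * \<phi> (pvar i * p * lin x ^ k)) has_derivative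
      (\<lambda>h. \<Sum>i\<in>UNIV. x $ i * (of_nat k * \<phi> (pvar i * p * lin h * lin x ^ (k - 1)))
        + h $ i * \<phi> (pvar i * p * lin x ^ k))) (at x)"
    by (rule has_derivative_sum)
  moreover have "\<phi> (p * lin y ^ Suc k) = (\<Sum>i\<in>UNIV. y $ i * \<phi> (pvar i * p * lin y ^ k))" for y
    using lin_mult[of y "p * lin y ^ k"] by (simp add: ac_simps)
  moreover have "(\<Sum>i\<in>UNIV. x $ i * (of_nat k * \<phi> (pvar i * p * lin h * lin x ^ (k - 1)))
      + h $ i * \<phi> (pvar i * p * lin x ^ k)) = of_nat (Suc k) * \<phi> (p * lin h * lin x ^ k)" for h
  proof -
    have "(\<Sum>i\<in>UNIV. h $ i * \<phi> (pvar i * p * lin x ^ k)) = \<phi> (p * lin h * lin x ^ k)"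
      using lin_mult[of h "p * lin x ^ k"] by (simp add: ac_simps)
    moreover have "(\<Sum>i\<in>UNIV. x $ i * (of_nat k * \<phi> (pvar i * p * lin h * lin x ^ (k - 1))))
        = of_nat k * \<phi> (p * lin h * lin x ^ k)"
    proof (cases k)
      case (Suc j)
      then show ?thesis
        using lin_mult[of x "p * lin h * lin x ^ j"] by (simp add: sum_distrib_left ac_simps)
    qed simp
    ultimately show ?thesis by (simp add: sum.distrib algebra_simps)
  qed
  ultimately show ?case by simp
qed simp

text \<open>
  expF p x stands for \<phi>(p \<cdot> exp(lin x)); the exponential series may be truncated after M terms
  because \<phi> kills the higher powers.
\<close>
definition expF :: "'n spoly \<Rightarrow> real^'n \<Rightarrow> real" where
  "expF p x = (\<Sum>k\<le>M. \<phi> (p * lin x ^ k) / fact k)"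

lemma has_derivative_expF:
  "(expF p has_derivative (\<lambda>h. \<Sum>k\<le>M. of_nat k * \<phi> (p * lin h * lin x ^ (k - 1)) / fact k)) (at x)"
  unfolding expF_def[abs_def] divide_inverse
  by (intro has_derivative_sum has_derivative_mult_left has_derivative_power_lin)

lemma ddir_expF: "ddir v (expF p) = expF (p * lin v)"
proof
  fix x
  have "ddir v (expF p) x = (\<Sum>k\<le>M. of_nat k * \<phi> (p * lin v * lin x ^ (k - 1)) / fact k)"
    by (rule ddir_eqI[OF has_derivative_expF])
  also have "\<dots> = (\<Sum>k<M. \<phi> (p * lin v * lin x ^ k) / fact k)"
    by (simp add: sum.atMost_shift del: of_nat_Suc)
  also have "\<dots> = expF (p * lin v) x"
    by (simp add: expF_def lessThan_Suc_atMost[symmetric] kills_powers)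
  finally show "ddir v (expF p) x = expF (p * lin v) x" .
qed

lemma smooth_expF: "smooth (expF p)"
proof (rule smooth_coinduct[where P = "\<lambda>h. \<exists>p. h = expF p"])
  fix h assume "\<exists>p. h = expF p"
  then obtain p where h: "h = expF p" by blast
  have "\<forall>x. h differentiable (at x)" unfolding h using has_derivative_expF differentiable_def by blast
  then show "(\<forall>x. h differentiable (at x)) \<and> (\<forall>v. (\<exists>p. ddir v h = expF p) \<or> smooth (ddir v h))"
    unfolding h ddir_expF by blast
qed blast

lemma dirs_expF: "dirs vs (expF p) = expF (p * prod_list (map lin vs))"
  by (induction vs) (simp_all add: ddir_expF ac_simps)

lemma expF_add: "expF (p + q) x = expF p x + expF q x"
  by (simp add: expF_def distrib_right add add_divide_distrib sum.distrib)

lemma expF_0: "expF 0 x = 0"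
  by (simp add: expF_def zero)

lemma expF_sum: "expF (\<Sum>i\<in>A. p i) x = (\<Sum>i\<in>A. expF (p i) x)"
  by (induction A rule: infinite_finite_induct) (simp_all add: expF_0 expF_add)

lemma expF_pconst_mult: "expF (pconst c * p) x = c * expF p x"
  unfolding expF_def by (simp add: mult.assoc pconst_mult sum_distrib_left)

lemma pact_expF: "pact q (expF p) = expF (p * q)"
proof
  fix x
  have "dmon m (expF p) = expF (p * Poly_Mapping.single m 1)" for m
    by (simp add: dmon_eq_dirs dirs_expF prod_list_lin_mono_dirs)
  then have "pact q (expF p) x
      = expF (\<Sum>m\<in>Poly_Mapping.keys q. pconst (Poly_Mapping.lookup q m) * (p * Poly_Mapping.single m 1)) x"
    by (simp add: pact_def expF_sum expF_pconst_mult)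
  also have "(\<Sum>m\<in>Poly_Mapping.keys q. pconst (Poly_Mapping.lookup q m) * (p * Poly_Mapping.single m 1)) = p * q"
    by (subst (3) sum_single_lookup[symmetric]) (simp add: sum_distrib_left pconst_def mult_single ac_simps)
  finally show "pact q (expF p) x = expF (p * q) x" .
qed

lemma expF_at_0: "expF p 0 = \<phi> p"
proof -
  have "expF p 0 = (\<Sum>k\<in>{0}. \<phi> (p * lin 0 ^ k) / fact k)"
    unfolding expF_def by (rule sum.mono_neutral_right) (auto simp: zero power_0_left)
  then show ?thesis by simp
qed

end

lemma smooth_if_in_D_T: "f \<in> D_T X T \<Longrightarrow> smooth f"
  by (simp add: D_T_def)

lemma pact_eq_0_if_in_D_T:
  fixes X :: "(real^'n::finite) list"
  assumes T_sub: "T \<subseteq> Pow {..<length X}" and f: "f \<in> D_T X T"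
    and p: "p \<in> ideal_gen (prodA X ` T)"
  shows "pact p f = (\<lambda>x. 0)"
proof (rule pact_ideal_gen[OF smooth_if_in_D_T[OF f] _ p])
  fix g assume "g \<in> prodA X ` T"
  then obtain A where A: "A \<in> T" "g = prodA X A" by blast
  then have "finite A" using T_sub finite_subset[of A "{..<length X}"] by auto
  then have "pact g f = dirs (map (\<lambda>i. X ! i) (sorted_list_of_set A)) f"
    unfolding A(2) by (rule pact_prodA[OF smooth_if_in_D_T[OF f]])
  also have "\<dots> = (\<lambda>x. 0)" using f A(1) by (simp add: D_T_def)
  finally show "pact g f = (\<lambda>x. 0)" .
qed

definition dual_at_0 :: "(real^'n \<Rightarrow> real) \<Rightarrow> 'n::finite spoly \<Rightarrow> real" where
  "dual_at_0 f = (\<lambda>q. pact q f 0)"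

lemma dual_at_0_add:
  "smooth f \<Longrightarrow> smooth g \<Longrightarrow> dual_at_0 (\<lambda>x. f x + g x) = (\<lambda>q. dual_at_0 f q + dual_at_0 g q)"
  using pact_lincomb[of f g _ 1 1] by (simp add: dual_at_0_def)

lemma dual_at_0_cmult: "smooth f \<Longrightarrow> dual_at_0 (\<lambda>x. c * f x) = (\<lambda>q. c * dual_at_0 f q)"
  using pact_lincomb[of f f _ c 0] by (simp add: dual_at_0_def)

lemma dual_at_0_pact: "smooth f \<Longrightarrow> dual_at_0 (pact p f) = (\<lambda>q. dual_at_0 f (p * q))"
  by (simp add: dual_at_0_def pact_mult mult.commute)

lemma dual_at_0_in_Hom_DstarT:
  assumes "T \<subseteq> Pow {..<length X}" "f \<in> D_T X T"
  shows "dual_at_0 f \<in> Hom_DstarT X T"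
  using pact_eq_0_if_in_D_T[OF assms]
  unfolding Hom_DstarT_def dual_at_0_def by (simp add: pact_add pact_pconst)

lemma inj_on_dual_at_0:
  fixes X :: "(real^'n::finite) list"
  assumes spans: "span (set X) = UNIV" and T_cocirc: "\<And>C. cocircuit X C \<Longrightarrow> C \<in> T"
    and T_sub: "T \<subseteq> Pow {..<length X}"
  shows "inj_on dual_at_0 (D_T X T)"
proof (rule inj_onI)
  fix f g assume f: "f \<in> D_T X T" and g: "g \<in> D_T X T" and eq: "dual_at_0 f = dual_at_0 g"
  define h where "h x = 1 * f x + (-1) * g x" for x
  have pact_h: "pact p h = (\<lambda>x. pact p f x - pact p g x)" for p
    using pact_lincomb[OF smooth_if_in_D_T[OF f] smooth_if_in_D_T[OF g], of p 1 "-1"]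
    by (simp add: h_def[abs_def])
  have "h x = 0" for x
  proof (rule eq_0_if_derivatives_at_0_vanish[OF spans T_cocirc])
    show "smooth h"
      unfolding h_def[abs_def] by (rule smooth_lincomb[OF smooth_if_in_D_T[OF f] smooth_if_in_D_T[OF g]])
    show "pact p h = (\<lambda>x. 0)" if "p \<in> ideal_gen (prodA X ` T)" for p
      using pact_eq_0_if_in_D_T[OF T_sub f that] pact_eq_0_if_in_D_T[OF T_sub g that] pact_h
      by simp
    show "pact q h 0 = 0" for q
      using fun_cong[OF eq, of q] pact_h by (simp add: dual_at_0_def)
  qed
  then show "f = g" by (simp add: h_def fun_eq_iff)
qed

lemma dual_at_0_surj:
  fixes X :: "(real^'n::finite) list"
  assumes spans: "span (set X) = UNIV" and T_cocirc: "\<And>C. cocircuit X C \<Longrightarrow> C \<in> T"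
    and T_sub: "T \<subseteq> Pow {..<length X}" and \<phi>: "\<phi> \<in> Hom_DstarT X T"
  shows "\<exists>f\<in>D_T X T. dual_at_0 f = \<phi>"
proof -
  have killed: "\<phi> p = 0" if "p \<in> ideal_gen (prodA X ` T)" for p
    using \<phi> that by (simp add: Hom_DstarT_def)
  have "\<phi> (p * lin v * lin x ^ length X) = 0" for p v x
  proof -
    have "lin v * lin x ^ length X \<in> ideal_gen (prodA X ` T)"
      using prod_list_lin_in_ideal[OF spans T_cocirc, of "v # replicate (length X) x"] by simp
    then show ?thesis using killed ideal_gen_mult_left[of _ _ p] by (simp add: mult.assoc)
  qed
  then interpret spoly_functional \<phi> "length X"
    using \<phi> by unfold_locales (simp_all add: Hom_DstarT_def)
  have "expF 1 \<in> D_T X T"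
    unfolding D_T_def
  proof (intro CollectI conjI ballI smooth_expF)
    fix A assume A: "A \<in> T"
    then have "finite A" using T_sub finite_subset[of A "{..<length X}"] by auto
    then have "dirs (map (\<lambda>i. X ! i) (sorted_list_of_set A)) (expF 1) = pact (prodA X A) (expF 1)"
      using pact_prodA[OF smooth_expF] by simp
    also have "\<dots> = expF (prodA X A)" by (simp add: pact_expF)
    also have "\<dots> = (\<lambda>x. 0)"
    proof
      fix x
      have "lin x ^ k * prodA X A \<in> ideal_gen (prodA X ` T)" for k
        using A by (intro ideal_gen_mult_left ideal_gen_base) blast
      then show "expF (prodA X A) x = 0"
        unfolding expF_def using killed by (simp add: mult.commute)
    qed
    finally show "dirs (map (\<lambda>i. X ! i) (sorted_list_of_set A)) (expF 1) = (\<lambda>x. 0)" .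
  qed
  moreover have "dual_at_0 (expF 1) = \<phi>"
    by (simp add: dual_at_0_def pact_expF expF_at_0 fun_eq_iff)
  ultimately show ?thesis by blast
qed

theorem lemma3p2:
  fixes X :: "(real^'n) list" and T :: "nat set set"
  assumes nonzero: "\<forall>a\<in>set X. a \<noteq> 0"
    and lattice: "\<forall>a\<in>set X. \<forall>i. a $ i \<in> \<int>"
    and spans: "span (set X) = UNIV"
    and T_sub: "T \<subseteq> Pow {..<length X}"
    and T_up: "\<And>A B. A \<in> T \<Longrightarrow> A \<subseteq> B \<Longrightarrow> B \<subseteq> {..<length X} \<Longrightarrow> B \<in> T"
    and T_cocirc: "\<And>C. cocircuit X C \<Longrightarrow> C \<in> T"
  shows "\<exists>\<Phi>. bij_betw \<Phi> (D_T X T) (Hom_DstarT X T)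
     \<and> (\<forall>f\<in>D_T X T. \<forall>g\<in>D_T X T. \<Phi> (\<lambda>x. f x + g x) = (\<lambda>q. \<Phi> f q + \<Phi> g q))
     \<and> (\<forall>f\<in>D_T X T. \<forall>c. \<Phi> (\<lambda>x. c * f x) = (\<lambda>q. c * \<Phi> f q))
     \<and> (\<forall>f\<in>D_T X T. \<forall>p. \<Phi> (pact p f) = (\<lambda>q. \<Phi> f (p * q)))"
proof (intro exI[of _ dual_at_0] conjI ballI allI)
  have "dual_at_0 ` D_T X T = Hom_DstarT X T"
    using dual_at_0_in_Hom_DstarT[OF T_sub] dual_at_0_surj[OF spans T_cocirc T_sub] by blast
  then show "bij_betw dual_at_0 (D_T X T) (Hom_DstarT X T)"
    using inj_on_dual_at_0[OF spans T_cocirc T_sub] by (simp add: bij_betw_def)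
qed (simp_all add: smooth_if_in_D_T dual_at_0_add dual_at_0_cmult dual_at_0_pact)

end
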